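(* Let $\delta=\sum_i a_i\delta_{x_i}$ be a purely discontinuous finite measure on $(-\pi,\pi)$, $b\in(-\pi,0)\cup(0,\pi)$, let $\delta_H$ be the polarization of $\delta$ with respect to $b$, and let $I=[b,\pi]$ if $b>0$ and $I=[-\pi,b]$ if $b<0$. Then: (a) for $x\in I$ and $x'=2b-x$: $u_\delta(x)+u_\delta(x')\le u_{\delta_H}(x)+u_{\delta_H}(x')$; (b) for $x\in I$ and $x'=2b-x$: $u_\delta(x)\le u_{\delta_H}(x')$; (c) if $b>0$ and $x\in[-\pi,b]$ (respectively $b<0$ and $x\in[b,\pi]$), then $u_\delta(x)\le u_{\delta_H}(x)$. Moreover, for $b>0$ (resp. $b<0$) the following are equivalent: (i) $u_\delta(x)=u_{\delta_H}(x)$ for some $x\in(-\pi,b]$ (resp. $x\in[b,\pi)$); (ii) this equality holds for all $x\in(-\pi,b]$ (resp. $x\in[b,\pi)$); (iii) $u_\delta\equiv u_{\delta_H}$ on $[-\pi,\pi]$; (iv) $\delta=\delta_H$.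
   Context: A purely discontinuous measure is $\delta=\sum_i a_i\delta_{x_i}$ with distinct points $x_i\in(-\pi,\pi)$, $a_i\ge0$, $\sum_i a_i<\infty$, not the zero measure. $G(x,y)=-\frac{xy}{2\pi}-\frac12|x-y|+\frac{\pi}{2}$ on $[-\pi,\pi]^2$ and $u_\delta(x)=\int G(x,y)\,d\delta(y)=\sum_i a_iG(x,x_i)$. Polarization of $\delta$ with respect to $b$ is the purely discontinuous measure $\delta_H$ defined by: for $b\in(0,\pi)$, $\delta_H(\{x\})=\delta(\{x\})$ for $x\in(-\pi,2b-\pi)$, $\delta_H(\{x\})=\max\{\delta(\{x\}),\delta(\{2b-x\})\}$ for $x\in[2b-\pi,b]$, $\delta_H(\{x\})=\min\{\delta(\{x\}),\delta(\{2b-x\})\}$ for $x\in[b,\pi)$; for $b\in(-\pi,0)$, $\delta_H(\{x\})=\min\{\delta(\{x\}),\delta(\{2b-x\})\}$ for $x\in(-\pi,b]$, $\delta_H(\{x\})=\max\{\delta(\{x\}),\delta(\{2b-x\})\}$ for $x\in[b,2b+\pi]$, $\delta_H(\{x\})=\delta(\{x\})$ for $x\in(2b+\pi,\pi)$. *)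

theory Defs
  imports "HOL-Analysis.Analysis"
begin

text \<open>A purely discontinuous finite measure on (-pi,pi) is represented by its mass
  function: a y is the mass of the atom at y (so the points are automatically distinct).\<close>

definition green :: "real \<Rightarrow> real \<Rightarrow> real" where
  "green x y = - (x * y) / (2 * pi) - \<bar>x - y\<bar> / 2 + pi / 2"

definition pd_measure :: "(real \<Rightarrow> real) \<Rightarrow> bool" where
  "pd_measure a \<longleftrightarrow> (\<forall>y. 0 \<le> a y) \<and> a summable_on UNIV
     \<and> (\<forall>y. a y \<noteq> 0 \<longrightarrow> -pi < y \<and> y < pi) \<and> (\<exists>y. a y \<noteq> 0)"

definition pot :: "(real \<Rightarrow> real) \<Rightarrow> real \<Rightarrow> real" where
  "pot a x = (\<Sum>\<^sub>\<infinity>y. a y * green x y)"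

definition polar :: "real \<Rightarrow> (real \<Rightarrow> real) \<Rightarrow> real \<Rightarrow> real" where
  "polar b a x =
    (if 0 < b then
       (if -pi < x \<and> x < 2*b - pi then a x
        else if 2*b - pi \<le> x \<and> x \<le> b then max (a x) (a (2*b - x))
        else if b \<le> x \<and> x < pi then min (a x) (a (2*b - x))
        else 0)
     else
       (if -pi < x \<and> x \<le> b then min (a x) (a (2*b - x))
        else if b \<le> x \<and> x \<le> 2*b + pi then max (a x) (a (2*b - x))
        else if 2*b + pi < x \<and> x < pi then a x
        else 0))"

end

theory Submission
  imports Defs
begin

(* Pair every point y with its mirror image 2b - y. For b > 0 and z <= b, polarization only
   redistributes mass inside the pair {z, 2b - z}: the larger mass goes to z, the smaller to
   2b - z. Hence u_{delta_H}(x') - u_delta(x) is a sum of pair contributions, and it suffices to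
   show that each one is nonnegative. In (a) and (c) a pair contributes
   (max - delta(z)) (K(z) - K(2b - z)), where K(z) - K(2b - z) equals 2b(b - z)/pi for
   K = G(x, .) + G(2b - x, .), and is nonnegative for K = G(x, .) when x <= b, strictly so when
   -pi < x and z < b; this strictness yields the equality case. Part (b) is a rearrangement
   inequality for the pair. The case b < 0 reduces to b > 0 under y -> -y, which leaves G
   invariant. *)

lemma green_commute: "green x y = green y x"
  unfolding green_def by (simp add: abs_minus_commute mult.commute)

lemma green_uminus: "green (-x) (-y) = green x y"
  unfolding green_def by (simp add: abs_minus_commute)

lemma abs_green_le: "\<bar>y\<bar> \<le> pi \<Longrightarrow> \<bar>green x y\<bar> \<le> \<bar>x\<bar> + pi"
proof -
  assume y: "\<bar>y\<bar> \<le> pi"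
  define t where "t = x * y / (2 * pi)"
  have "\<bar>x * y\<bar> \<le> \<bar>x\<bar> * pi"
    unfolding abs_mult using y by (rule mult_left_mono) simp
  then have "\<bar>t\<bar> \<le> \<bar>x\<bar> / 2"
    unfolding t_def by (simp add: field_simps)
  then have "t \<le> \<bar>x\<bar> / 2" "- t \<le> \<bar>x\<bar> / 2"
    by (simp_all only: abs_le_iff)
  moreover have "\<bar>x - y\<bar> \<le> \<bar>x\<bar> + pi"
    using y by linarith
  moreover have "green x y = pi / 2 - t - \<bar>x - y\<bar> / 2"
    unfolding green_def t_def by simp
  ultimately show ?thesis
    using pi_gt_zero by argo
qed

lemma green_reflect_pair:
  "green x z + green (2*b - x) z - green x (2*b - z) - green (2*b - x) (2*b - z) = 2*b*(b - z)/pi"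
proof -
  have "\<bar>(2*b - x) - (2*b - z)\<bar> = \<bar>x - z\<bar>" "\<bar>x - (2*b - z)\<bar> = \<bar>(2*b - x) - z\<bar>"
    by linarith+
  then show ?thesis
    unfolding green_def by (simp add: field_simps)
qed

lemma green_reflect_cross: "green (2*b - x) z - green x (2*b - z) = b*(x - z)/pi"
proof -
  have "\<bar>x - (2*b - z)\<bar> = \<bar>(2*b - x) - z\<bar>"
    by linarith
  then show ?thesis
    unfolding green_def by (simp add: field_simps)
qed

lemma green_reflect_lower_bound:
  assumes "0 < b" "-pi \<le> x" "x \<le> b" "2*b - pi \<le> z" "z \<le> b"
  shows "(b - z) * min (x + pi) b \<le> pi * (green x z - green x (2*b - z))"
proof -
  have "\<bar>x - (2*b - z)\<bar> = 2*b - x - z"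
    using assms by linarith
  then have diff: "pi * (green x z - green x (2*b - z)) = x*(b - z) + pi*(2*b - x - z - \<bar>x - z\<bar>)/2"
    unfolding green_def by (simp add: field_simps)
  show ?thesis
  proof (cases "x \<le> z")
    case True
    then have "pi * (green x z - green x (2*b - z)) = (b - z) * (x + pi)"
      unfolding diff by (simp add: field_simps)
    moreover have "(b - z) * min (x + pi) b \<le> (b - z) * (x + pi)"
      using assms by (intro mult_left_mono) auto
    ultimately show ?thesis
      by simp
  next
    case False
    then have "pi * (green x z - green x (2*b - z)) = (b - z) * b + (b - x) * (pi - b + z)"
      unfolding diff by (simp add: field_simps)
    moreover have "0 \<le> (b - x) * (pi - b + z)"
      using assms by simp
    moreover have "(b - z) * min (x + pi) b \<le> (b - z) * b"
      using assms by (intro mult_left_mono) auto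
    ultimately show ?thesis
      by linarith
  qed
qed

lemma green_reflect_le:
  "0 < b \<Longrightarrow> -pi \<le> x \<Longrightarrow> x \<le> b \<Longrightarrow> 2*b - pi \<le> z \<Longrightarrow> z \<le> b \<Longrightarrow>
    green x (2*b - z) \<le> green x z"
  using green_reflect_lower_bound[of b x z] pi_gt_zero
  by (smt (verit) mult_nonneg_nonneg mult_pos_pos zero_le_mult_iff)

lemma green_reflect_less:
  "0 < b \<Longrightarrow> -pi < x \<Longrightarrow> x \<le> b \<Longrightarrow> 2*b - pi \<le> z \<Longrightarrow> z < b \<Longrightarrow>
    green x (2*b - z) < green x z"
  using green_reflect_lower_bound[of b x z] pi_gt_zero
  by (smt (verit) mult_pos_pos zero_less_mult_iff)

lemma max_min_rearrangement:
  fixes p q A B C D :: real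
  assumes "0 \<le> p" "0 \<le> q" "C \<le> A" "D \<le> A" "C + D \<le> A + B"
  shows "p * C + q * D \<le> max p q * A + min p q * B"
proof (cases "q \<le> p")
  case True
  then have "max p q * A + min p q * B - (p * C + q * D) = (p - q) * (A - C) + q * (A + B - (C + D))"
    by (simp add: algebra_simps)
  moreover have "0 \<le> (p - q) * (A - C) + q * (A + B - (C + D))"
    using True assms by simp
  ultimately show ?thesis
    by linarith
next
  case False
  then have "max p q * A + min p q * B - (p * C + q * D) = (q - p) * (A - D) + p * (A + B - (C + D))"
    by (simp add: algebra_simps)
  moreover have "0 \<le> (q - p) * (A - D) + p * (A + B - (C + D))"
    using False assms by simp
  ultimately show ?thesis
    by linarith
qed

lemma has_sum_diff:
  fixes f g :: "'a \<Rightarrow> 'b::topological_ab_group_add"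
  assumes "(f has_sum s) A" "(g has_sum t) A"
  shows "((\<lambda>x. f x - g x) has_sum (s - t)) A"
proof -
  have "((\<lambda>x. - g x) has_sum (- t)) A"
    using assms(2) by (simp add: has_sum_uminus)
  from has_sum_add[OF assms(1) this] show ?thesis
    by simp
qed

lemma has_sum_reflect:
  fixes F :: "real \<Rightarrow> 'b::topological_comm_monoid_add"
  assumes "(F has_sum s) UNIV"
  shows "((\<lambda>y. F (2*c - y)) has_sum s) UNIV"
proof -
  have "bij_betw (\<lambda>y. 2*c - y) UNIV UNIV"
    by (rule bij_betwI[where g = "\<lambda>y. 2*c - y"]) auto
  from has_sum_reindex_bij_betw[OF this, of F s] show ?thesis
    using assms by simp
qed

lemma reflect_pair_nonneg:
  fixes F :: "real \<Rightarrow> real"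
  assumes "\<And>z. z \<le> c \<Longrightarrow> 0 \<le> F z + F (2*c - z)"
  shows "0 \<le> F y + F (2*c - y)"
proof (cases "y \<le> c")
  case False
  then have "0 \<le> F (2*c - y) + F (2*c - (2*c - y))"
    by (intro assms) simp
  then show ?thesis
    by simp
qed (rule assms)

lemma has_sum_reflect_pairs:
  fixes F :: "real \<Rightarrow> real"
  assumes "(F has_sum s) UNIV"
  shows "((\<lambda>y. F y + F (2*c - y)) has_sum (s + s)) UNIV"
  using has_sum_add[OF assms has_sum_reflect[OF assms]] .

lemma has_sum_nonneg_reflect_pairs:
  fixes F :: "real \<Rightarrow> real"
  assumes "(F has_sum s) UNIV" "\<And>z. z \<le> c \<Longrightarrow> 0 \<le> F z + F (2*c - z)"
  shows "0 \<le> s"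
proof -
  have "0 \<le> s + s"
    by (rule has_sum_nonneg[OF has_sum_reflect_pairs[OF assms(1)]])
      (rule reflect_pair_nonneg[of c F, OF assms(2)])
  then show ?thesis
    by simp
qed

lemma has_sum_zero_reflect_pairs:
  fixes F :: "real \<Rightarrow> real"
  assumes "(F has_sum 0) UNIV" "\<And>z. z \<le> c \<Longrightarrow> 0 \<le> F z + F (2*c - z)"
  shows "F y + F (2*c - y) = 0"
  by (rule nonneg_has_sum_le_0D[OF has_sum_reflect_pairs[OF assms(1)]])
    (simp_all add: reflect_pair_nonneg[of c F, OF assms(2)])

lemma has_sum_pot:
  assumes "pd_measure m"
  shows "((\<lambda>y. m y * green x y) has_sum pot m x) UNIV"
proof -
  have m: "\<And>y. 0 \<le> m y" "m summable_on UNIV" "\<And>y. m y \<noteq> 0 \<Longrightarrow> -pi < y \<and> y < pi"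
    using assms unfolding pd_measure_def by auto
  have bound: "norm (m y * green x y) \<le> m y * (\<bar>x\<bar> + pi)" for y
  proof (cases "m y = 0")
    case False
    then have "\<bar>y\<bar> \<le> pi"
      using m(3) by fastforce
    then have "\<bar>green x y\<bar> \<le> \<bar>x\<bar> + pi"
      by (rule abs_green_le)
    then show ?thesis
      unfolding real_norm_def abs_mult abs_of_nonneg[OF m(1)] using m(1) by (rule mult_left_mono)
  qed simp
  have "(\<lambda>y. m y * (\<bar>x\<bar> + pi)) summable_on UNIV"
    using m(2) by (rule summable_on_cmult_left)
  then have "(\<lambda>y. norm (m y * green x y)) summable_on UNIV"
    by (rule summable_on_comparison_test) (rule bound, simp)
  then show ?thesis
    unfolding pot_def by (simp add: abs_summable_summable)
qed

lemma has_sum_pot_diff: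
  "pd_measure m \<Longrightarrow> pd_measure n \<Longrightarrow>
    ((\<lambda>y. m y * green x y - n y * green x' y) has_sum (pot m x - pot n x')) UNIV"
  by (intro has_sum_diff has_sum_pot)

lemma polar_reflect_pair:
  assumes "pd_measure a" "0 < b" "b < pi" "z \<le> b"
  shows "polar b a z = max (a z) (a (2*b - z))"
    and "polar b a (2*b - z) = min (a z) (a (2*b - z))"
proof -
  have a0: "\<And>y. 0 \<le> a y" and out: "\<And>y. y \<le> -pi \<or> pi \<le> y \<Longrightarrow> a y = 0"
    using assms(1) unfolding pd_measure_def by force+
  consider "z \<le> -pi" | "-pi < z" "z < 2*b - pi" | "2*b - pi \<le> z"
    by linarith
  then have "polar b a z = max (a z) (a (2*b - z)) \<and> polar b a (2*b - z) = min (a z) (a (2*b - z))"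
  proof cases
    case 1
    then show ?thesis
      using assms out[of z] out[of "2*b - z"] unfolding polar_def by auto
  next
    case 2
    then show ?thesis
      using assms a0[of z] out[of "2*b - z"] unfolding polar_def by auto
  next
    case 3
    then show ?thesis
      using assms a0[of z] out[of "2*b - z"] unfolding polar_def
      by (cases "z = b") (auto simp: max.commute min.commute)
  qed
  then show "polar b a z = max (a z) (a (2*b - z))" "polar b a (2*b - z) = min (a z) (a (2*b - z))"
    by auto
qed

lemma polar_reflect_pair_diff:
  assumes "pd_measure a" "0 < b" "b < pi" "z \<le> b"
  shows "(polar b a z - a z) * f z + (polar b a (2*b - z) - a (2*b - z)) * f (2*b - z)
    = (max (a z) (a (2*b - z)) - a z) * (f z - f (2*b - z))"
  unfolding polar_reflect_pair[OF assms]
  by (cases "a z \<le> a (2*b - z)") (simp_all add: max_def min_def algebra_simps)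

lemma mass_less_reflect_imp_bounds:
  assumes "pd_measure a" "z \<le> b" "a z < a (2*b - z)"
  shows "2*b - pi < z" "z < b"
proof -
  have "a (2*b - z) \<noteq> 0"
    using assms unfolding pd_measure_def by (metis not_less)
  then show "2*b - pi < z"
    using assms(1) unfolding pd_measure_def by force
  show "z < b"
    using assms(2,3) by (cases "z = b") auto
qed

lemma pd_measure_polar:
  assumes "pd_measure a" "0 < b" "b < pi"
  shows "pd_measure (polar b a)"
proof -
  have a0: "\<And>y. 0 \<le> a y" and s: "a summable_on UNIV"
    using assms(1) unfolding pd_measure_def by auto
  obtain y where "a y \<noteq> 0"
    using assms(1) unfolding pd_measure_def by blast
  then have y: "0 < a y"
    using a0[of y] by simp
  have nonneg: "0 \<le> polar b a y" for y
    unfolding polar_def using a0 by (auto simp: le_max_iff_disj)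
  have "(\<lambda>y. a y + a (2*b - y)) summable_on UNIV"
    using has_sum_reflect_pairs[OF has_sum_infsum[OF s]] unfolding summable_on_def by blast
  moreover have "polar b a y \<le> a y + a (2*b - y)" for y
    unfolding polar_def using a0 by (auto simp: add_increasing add_increasing2 min_le_iff_disj)
  ultimately have "polar b a summable_on UNIV"
    by (rule summable_on_comparison_test) (simp_all add: nonneg)
  moreover have "polar b a y \<noteq> 0 \<Longrightarrow> -pi < y \<and> y < pi" for y
    unfolding polar_def using assms by (auto split: if_splits)
  moreover have "\<exists>y. polar b a y \<noteq> 0"
  proof -
    obtain z where z: "z \<le> b" "y = z \<or> y = 2*b - z"
      by (cases "y \<le> b") (auto intro: that[of "2*b - y"])
    have "polar b a z + polar b a (2*b - z) = a z + a (2*b - z)"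
      using polar_reflect_pair[OF assms z(1)] by (simp add: max_def min_def)
    moreover have "0 < a z + a (2*b - z)"
      using z(2) y a0[of z] a0[of "2*b - z"] by auto
    ultimately show ?thesis
      by (metis add.right_neutral less_irrefl)
  qed
  ultimately show ?thesis
    unfolding pd_measure_def using nonneg by blast
qed

lemma polar_eq_self:
  assumes "pd_measure a" "0 < b" "b < pi" "\<And>z. z \<le> b \<Longrightarrow> a (2*b - z) \<le> a z"
  shows "polar b a = a"
proof
  fix y
  show "polar b a y = a y"
  proof (cases "y \<le> b")
    case True
    then show ?thesis
      using polar_reflect_pair(1)[OF assms(1-3) True] assms(4)[OF True] by simp
  next
    case False
    then have "2*b - y \<le> b"
      by simp
    then show ?thesis
      using polar_reflect_pair(2)[OF assms(1-3), of "2*b - y"] assms(4)[of "2*b - y"] by simp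
  qed
qed

lemma polar_reflect_pair_green_nonneg:
  assumes "pd_measure a" "0 < b" "b < pi" "-pi \<le> x" "x \<le> b" "z \<le> b"
  shows "0 \<le> (polar b a z - a z) * green x z + (polar b a (2*b - z) - a (2*b - z)) * green x (2*b - z)"
proof (cases "a z < a (2*b - z)")
  case True
  then have "green x (2*b - z) \<le> green x z"
    using mass_less_reflect_imp_bounds[OF assms(1,6)] assms by (intro green_reflect_le) auto
  then show ?thesis
    unfolding polar_reflect_pair_diff[OF assms(1-3,6)] by simp
next
  case False
  then show ?thesis
    unfolding polar_reflect_pair_diff[OF assms(1-3,6)] by simp
qed

lemma polar_reflect_pair_green_pos:
  assumes "pd_measure a" "0 < b" "b < pi" "-pi < x" "x \<le> b" "z \<le> b" "a z < a (2*b - z)"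
  shows "0 < (polar b a z - a z) * green x z + (polar b a (2*b - z) - a (2*b - z)) * green x (2*b - z)"
proof -
  have "green x (2*b - z) < green x z"
    using mass_less_reflect_imp_bounds[OF assms(1,6,7)] assms by (intro green_reflect_less) auto
  then show ?thesis
    unfolding polar_reflect_pair_diff[OF assms(1-3,6)] using assms(7) by simp
qed

lemma has_sum_pot_polar_diff:
  assumes "pd_measure a" "0 < b" "b < pi"
  shows "((\<lambda>y. (polar b a y - a y) * green x y) has_sum (pot (polar b a) x - pot a x)) UNIV"
  using has_sum_pot_diff[OF pd_measure_polar[OF assms] assms(1), of x x]
  by (simp add: left_diff_distrib)

lemma pot_add_reflect_le_pot_polar_pos:
  assumes "pd_measure a" "0 < b" "b < pi"
  shows "pot a x + pot a (2*b - x) \<le> pot (polar b a) x + pot (polar b a) (2*b - x)"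
proof -
  let ?f = "\<lambda>y. green x y + green (2*b - x) y"
  have "((\<lambda>y. (polar b a y - a y) * ?f y) has_sum
      (pot (polar b a) x - pot a x + (pot (polar b a) (2*b - x) - pot a (2*b - x)))) UNIV"
    using has_sum_add[OF has_sum_pot_polar_diff[OF assms, of x] has_sum_pot_polar_diff[OF assms, of "2*b - x"]]
    by (simp add: distrib_left)
  moreover have "0 \<le> (polar b a z - a z) * ?f z + (polar b a (2*b - z) - a (2*b - z)) * ?f (2*b - z)"
    if "z \<le> b" for z
  proof -
    have "0 \<le> 2*b*(b - z)/pi"
      using assms that by simp
    then have "0 \<le> ?f z - ?f (2*b - z)"
      using green_reflect_pair[of x z b] by simp
    then show ?thesis
      unfolding polar_reflect_pair_diff[OF assms that, of ?f] by (intro mult_nonneg_nonneg) simp_all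
  qed
  ultimately have "0 \<le> pot (polar b a) x - pot a x + (pot (polar b a) (2*b - x) - pot a (2*b - x))"
    by (rule has_sum_nonneg_reflect_pairs)
  then show ?thesis
    by simp
qed

lemma pot_le_pot_polar_pos:
  assumes "pd_measure a" "0 < b" "b < pi" "-pi \<le> x" "x \<le> b"
  shows "pot a x \<le> pot (polar b a) x"
proof -
  have "0 \<le> pot (polar b a) x - pot a x"
    using has_sum_pot_polar_diff[OF assms(1-3)] polar_reflect_pair_green_nonneg[OF assms]
    by (rule has_sum_nonneg_reflect_pairs)
  then show ?thesis
    by simp
qed

lemma polar_eq_self_if_pot_eq_pos:
  assumes "pd_measure a" "0 < b" "b < pi" "-pi < x" "x \<le> b" "pot a x = pot (polar b a) x"
  shows "polar b a = a"
proof (rule polar_eq_self[OF assms(1-3)])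
  fix z
  assume z: "z \<le> b"
  have "((\<lambda>y. (polar b a y - a y) * green x y) has_sum 0) UNIV"
    using has_sum_pot_polar_diff[OF assms(1-3), of x] assms(6) by simp
  then have "(polar b a z - a z) * green x z + (polar b a (2*b - z) - a (2*b - z)) * green x (2*b - z) = 0"
    using polar_reflect_pair_green_nonneg[OF assms(1-3)] assms(4,5)
    by (intro has_sum_zero_reflect_pairs) auto
  then show "a (2*b - z) \<le> a z"
    using polar_reflect_pair_green_pos[OF assms(1-5) z] by fastforce
qed

lemma pot_le_pot_polar_reflect_pos:
  assumes "pd_measure a" "0 < b" "b < pi" "b \<le> x" "x \<le> pi"
  shows "pot a x \<le> pot (polar b a) (2*b - x)"
proof -
  let ?x' = "2*b - x"
  let ?F = "\<lambda>y. polar b a y * green ?x' y - a y * green x y"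
  have a0: "\<And>y. 0 \<le> a y"
    using assms(1) unfolding pd_measure_def by auto
  have "0 \<le> ?F z + ?F (2*b - z)" if z: "z \<le> b" for z
  proof (cases "-pi < z")
    case True
    have "green z x \<le> green z ?x'"
      using green_reflect_le[of b z ?x'] assms z True by simp
    then have CA: "green x z \<le> green ?x' z"
      by (simp add: green_commute)
    have "0 \<le> b * (x - z) / pi"
      using assms z by simp
    then have DA: "green x (2*b - z) \<le> green ?x' z"
      using green_reflect_cross[of b x z] by simp
    have "2*b*(b - x)/pi \<le> 0"
      using assms by (simp add: divide_nonpos_pos mult_nonneg_nonpos)
    then have CDAB: "green x z + green x (2*b - z) \<le> green ?x' z + green ?x' (2*b - z)"
      using green_reflect_pair[of z x b] green_commute[of x z] green_commute[of x "2*b - z"]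
        green_commute[of ?x' z] green_commute[of ?x' "2*b - z"]
      by linarith
    have "a z * green x z + a (2*b - z) * green x (2*b - z)
        \<le> polar b a z * green ?x' z + polar b a (2*b - z) * green ?x' (2*b - z)"
      unfolding polar_reflect_pair[OF assms(1-3) z]
      using a0[of z] a0[of "2*b - z"] CA DA CDAB by (rule max_min_rearrangement)
    then show ?thesis
      by simp
  next
    case False
    then have "a z = 0" "a (2*b - z) = 0"
      using assms(1,2) unfolding pd_measure_def by force+
    then show ?thesis
      using polar_reflect_pair[OF assms(1-3) z] by simp
  qed
  then have "0 \<le> pot (polar b a) ?x' - pot a x"
    by (rule has_sum_nonneg_reflect_pairs[OF has_sum_pot_diff[OF pd_measure_polar[OF assms(1-3)] assms(1)]])
  then show ?thesis
    by simp
qed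

lemma pot_uminus: "pot (\<lambda>y. m (-y)) x = pot m (-x)"
proof -
  have "infsum (\<lambda>y. m (-y) * green (-x) (-y)) UNIV = infsum (\<lambda>y. m y * green (-x) y) UNIV"
    by (rule infsum_reindex_bij_betw[OF bij_uminus])
  then show ?thesis
    unfolding pot_def green_uminus .
qed

lemma pd_measure_uminus:
  assumes "pd_measure m"
  shows "pd_measure (\<lambda>y. m (-y))"
proof -
  have m: "\<And>y. 0 \<le> m y" "m summable_on UNIV" "\<And>y. m y \<noteq> 0 \<Longrightarrow> -pi < y \<and> y < pi"
    "\<exists>y. m y \<noteq> 0"
    using assms unfolding pd_measure_def by auto
  have "(\<lambda>y. m (-y)) summable_on UNIV"
    using summable_on_reindex_bij_betw[OF bij_uminus, of m] m(2) by simp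
  moreover have "-pi < y \<and> y < pi" if "m (-y) \<noteq> 0" for y
    using m(3)[OF that] by linarith
  moreover have "\<exists>y. m (-y) \<noteq> 0"
    using m(4) by (metis minus_minus)
  ultimately show ?thesis
    unfolding pd_measure_def using m(1) by blast
qed

lemma polar_uminus:
  assumes "b < 0"
  shows "polar (-b) (\<lambda>y. a (-y)) = (\<lambda>y. polar b a (-y))"
proof
  fix x
  show "polar (-b) (\<lambda>y. a (-y)) x = polar b a (-x)"
    using assms unfolding polar_def
    by (cases "x = -b") (auto simp: add.commute max.commute min.commute)
qed

lemma pot_add_reflect_le_pot_polar:
  assumes "pd_measure a" "b \<in> {-pi<..<0} \<union> {0<..<pi}"
  shows "pot a x + pot a (2*b - x) \<le> pot (polar b a) x + pot (polar b a) (2*b - x)"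
proof (cases "0 < b")
  case True
  then show ?thesis
    using assms pot_add_reflect_le_pot_polar_pos by simp
next
  case False
  then have b: "b < 0" "0 < -b" "-b < pi"
    using assms(2) by auto
  from pot_add_reflect_le_pot_polar_pos[OF pd_measure_uminus[OF assms(1)] b(2,3), of "-x"]
  show ?thesis
    by (simp add: pot_uminus polar_uminus[OF b(1)])
qed

lemma pot_le_pot_polar_reflect:
  assumes "pd_measure a" "b \<in> {-pi<..<0} \<union> {0<..<pi}"
    and "x \<in> (if 0 < b then {b..pi} else {-pi..b})"
  shows "pot a x \<le> pot (polar b a) (2*b - x)"
proof (cases "0 < b")
  case True
  then show ?thesis
    using assms pot_le_pot_polar_reflect_pos by simp
next
  case False
  then have b: "b < 0" "0 < -b" "-b < pi" and x: "-b \<le> -x" "-x \<le> pi"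
    using assms(2,3) by auto
  from pot_le_pot_polar_reflect_pos[OF pd_measure_uminus[OF assms(1)] b(2,3) x]
  show ?thesis
    by (simp add: pot_uminus polar_uminus[OF b(1)])
qed

lemma pot_le_pot_polar:
  assumes "pd_measure a" "b \<in> {-pi<..<0} \<union> {0<..<pi}"
    and "x \<in> (if 0 < b then {-pi..b} else {b..pi})"
  shows "pot a x \<le> pot (polar b a) x"
proof (cases "0 < b")
  case True
  then show ?thesis
    using assms pot_le_pot_polar_pos by simp
next
  case False
  then have b: "b < 0" "0 < -b" "-b < pi" and x: "-pi \<le> -x" "-x \<le> -b"
    using assms(2,3) by auto
  from pot_le_pot_polar_pos[OF pd_measure_uminus[OF assms(1)] b(2,3) x]
  show ?thesis
    by (simp add: pot_uminus polar_uminus[OF b(1)])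
qed

lemma polar_eq_self_if_pot_eq:
  assumes "pd_measure a" "b \<in> {-pi<..<0} \<union> {0<..<pi}"
    and "x \<in> (if 0 < b then {-pi<..b} else {b..<pi})" "pot a x = pot (polar b a) x"
  shows "polar b a = a"
proof (cases "0 < b")
  case True
  with assms(2,3) have "b < pi" "-pi < x" "x \<le> b"
    by auto
  with True show ?thesis
    using polar_eq_self_if_pot_eq_pos[OF assms(1)] assms(4) by blast
next
  case False
  then have b: "b < 0" "0 < -b" "-b < pi" and x: "-pi < -x" "-x \<le> -b"
    using assms(2,3) by auto
  have "pot (\<lambda>y. a (-y)) (-x) = pot (polar (-b) (\<lambda>y. a (-y))) (-x)"
    using assms(4) by (simp add: pot_uminus polar_uminus[OF b(1)])
  from polar_eq_self_if_pot_eq_pos[OF pd_measure_uminus[OF assms(1)] b(2,3) x this]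
  have "(\<lambda>y. polar b a (-y)) = (\<lambda>y. a (-y))"
    unfolding polar_uminus[OF b(1)] .
  then show ?thesis
    unfolding fun_eq_iff by (metis minus_minus)
qed

theorem lemma4p4:
  fixes a :: "real \<Rightarrow> real" and b :: real
  assumes "pd_measure a"
    and "b \<in> {-pi<..<0} \<union> {0<..<pi}"
  shows
    "(\<forall>x \<in> (if 0 < b then {b..pi} else {-pi..b}).
        pot a x + pot a (2*b - x) \<le> pot (polar b a) x + pot (polar b a) (2*b - x))
   \<and> (\<forall>x \<in> (if 0 < b then {b..pi} else {-pi..b}).
        pot a x \<le> pot (polar b a) (2*b - x))
   \<and> (\<forall>x \<in> (if 0 < b then {-pi..b} else {b..pi}). pot a x \<le> pot (polar b a) x)
   \<and> ((\<exists>x \<in> (if 0 < b then {-pi<..b} else {b..<pi}). pot a x = pot (polar b a) x)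
        \<longleftrightarrow> (\<forall>x \<in> (if 0 < b then {-pi<..b} else {b..<pi}). pot a x = pot (polar b a) x))
   \<and> ((\<forall>x \<in> (if 0 < b then {-pi<..b} else {b..<pi}). pot a x = pot (polar b a) x)
        \<longleftrightarrow> (\<forall>x \<in> {-pi..pi}. pot a x = pot (polar b a) x))
   \<and> ((\<forall>x \<in> {-pi..pi}. pot a x = pot (polar b a) x) \<longleftrightarrow> a = polar b a)"
proof -
  let ?J = "if 0 < b then {-pi<..b} else {b..<pi}"
  let ?P = "\<lambda>x. pot a x = pot (polar b a) x"
  have J: "b \<in> ?J" "?J \<subseteq> {-pi..pi}"
    using assms(2) by auto
  have all: "?P x" if "y \<in> ?J" "?P y" for x y
    using polar_eq_self_if_pot_eq[OF assms that] by simp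
  have iff1: "(\<exists>x \<in> ?J. ?P x) \<longleftrightarrow> (\<forall>x \<in> ?J. ?P x)"
    using all J(1) by blast
  have iff2: "(\<forall>x \<in> ?J. ?P x) \<longleftrightarrow> (\<forall>x \<in> {-pi..pi}. ?P x)"
    using all J by blast
  have iff3: "(\<forall>x \<in> {-pi..pi}. ?P x) \<longleftrightarrow> a = polar b a"
  proof
    assume "\<forall>x \<in> {-pi..pi}. ?P x"
    then have "?P b"
      using J by blast
    then show "a = polar b a"
      using polar_eq_self_if_pot_eq[OF assms J(1)] by simp
  qed simp
  show ?thesis
    unfolding iff1 iff2 iff3
    by (intro conjI ballI refl pot_add_reflect_le_pot_polar[OF assms]
        pot_le_pot_polar_reflect[OF assms] pot_le_pot_polar[OF assms])
qed

end
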